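(* Let $p\in\mathscr P(\mathbb C)$. There is a constant $C>0$ such that for every $f\in\mathcal F^{p(\cdot)}$ and every $z\in\mathbb C$, \[|f(z)|\le C e^{|z|^2}\|f\|_{\mathcal F^{p(\cdot)}}.\] In particular each evaluation functional $f\mapsto f(z)$ is bounded on $\mathcal F^{p(\cdot)}$.
   Context: $A$ denotes Lebesgue area measure on $\mathbb C$. A variable exponent is a measurable function $p:\mathbb C\to[1,\infty)$; $p^+=\operatorname{ess\,sup}_{\mathbb C}p$, and $\mathscr P(\mathbb C)$ is the set of variable exponents with $p^+<\infty$. $\mathcal L^{p(\cdot)}$ is the space of measurable $f:\mathbb C\to\mathbb C$ such that $\int_{\mathbb C}(\lambda|f(z)|)^{p(z)}e^{-p(z)|z|^2}\,dA(z)<\infty$ for some $\lambda>0$, normed by $\|f\|_{\mathcal L^{p(\cdot)}}=\inf\{\lambda>0:\int_{\mathbb C}(|f(z)|/\lambda)^{p(z)}e^{-p(z)|z|^2}\,dA(z)\le1\}$. The variable exponent Fock space $\mathcal F^{p(\cdot)}$ is the set of entire functions belonging to $\mathcal L^{p(\cdot)}$, with the same norm $\|\cdot\|_{\mathcal F^{p(\cdot)}}=\|\cdot\|_{\mathcal L^{p(\cdot)}}$. *)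

theory Defs
  imports "HOL-Analysis.Analysis"
begin

definition variable_exponent :: "(complex \<Rightarrow> real) \<Rightarrow> bool" where
  "variable_exponent p \<longleftrightarrow> p \<in> borel_measurable lebesgue \<and> (\<forall>z. 1 \<le> p z)"

definition var_exp_class :: "(complex \<Rightarrow> real) set" where
  "var_exp_class = {p. variable_exponent p \<and> (\<exists>M::real. AE z in lebesgue. p z \<le> M)}"

definition fock_modular :: "(complex \<Rightarrow> real) \<Rightarrow> (complex \<Rightarrow> complex) \<Rightarrow> ennreal" where
  "fock_modular p g = (\<integral>\<^sup>+ z. ennreal ((cmod (g z)) powr (p z) * exp (- p z * (cmod z)\<^sup>2)) \<partial>lebesgue)"

definition var_L :: "(complex \<Rightarrow> real) \<Rightarrow> (complex \<Rightarrow> complex) set" where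
  "var_L p = {f. f \<in> borel_measurable lebesgue \<and>
      (\<exists>c>0. fock_modular p (\<lambda>z. of_real c * f z) < \<infinity>)}"

definition var_L_norm :: "(complex \<Rightarrow> real) \<Rightarrow> (complex \<Rightarrow> complex) \<Rightarrow> real" where
  "var_L_norm p f = Inf {t::real. t > 0 \<and> fock_modular p (\<lambda>z. f z / of_real t) \<le> 1}"

definition var_Fock :: "(complex \<Rightarrow> real) \<Rightarrow> (complex \<Rightarrow> complex) set" where
  "var_Fock p = {f. f holomorphic_on UNIV \<and> f \<in> var_L p}"

end

theory Submission
  imports Defs "HOL-Complex_Analysis.Complex_Analysis"
begin

text \<open>Multiplying an entire \<open>f\<close> by the entire factor \<open>exp (|z|\<^sup>2 - 2 cnj z w)\<close> gives \<open>G\<close> with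
  \<open>|G w| = |f w| exp (- |w|\<^sup>2) exp (|w - z|\<^sup>2)\<close>, so \<open>|G z| = |f z| exp (- |z|\<^sup>2)\<close>.
  Cauchy's formula on the squares of half-side \<open>s\<close> around \<open>z\<close>, averaged over \<open>s \<in> [1/2, 1]\<close>,
  bounds \<open>\<pi> |G z|\<close> by \<open>8\<close> times the integral of \<open>|G|\<close> over the square \<open>Q\<close> of half-side \<open>1\<close>.
  On \<open>Q\<close> we have \<open>exp (|w - z|\<^sup>2) \<le> e\<^sup>2\<close>, and \<open>x \<le> 1 + x\<^sup>p\<close> for \<open>x \<ge> 0, p \<ge> 1\<close>, so that integral
  is at most \<open>e\<^sup>2 (|Q| + \<rho>(f))\<close> with \<open>\<rho>\<close> the modular. For \<open>f/t\<close> with \<open>\<rho>(f/t) \<le> 1\<close> this gives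
  \<open>|f z| \<le> (40 e\<^sup>2/\<pi>) exp (|z|\<^sup>2) t\<close>, and the infimum over \<open>t\<close> is the norm.\<close>

lemma borel_measurable_Complex [measurable]:
  "f \<in> borel_measurable M \<Longrightarrow> g \<in> borel_measurable M \<Longrightarrow> (\<lambda>x. Complex (f x) (g x)) \<in> borel_measurable M"
  unfolding Complex_eq by (intro borel_measurable_add borel_measurable_times; measurable)

lemma lborel_complex_eq_distr_pair:
  "(lborel :: complex measure) = distr (lborel \<Otimes>\<^sub>M lborel) borel (\<lambda>(x, y). Complex x y)"
proof (rule lborel_eqI)
  have [measurable]: "(\<lambda>(x, y). Complex x y) \<in> borel_measurable (lborel \<Otimes>\<^sub>M lborel)"
    by (simp add: case_prod_unfold) measurable
  fix l u :: complex assume le: "\<And>b. b \<in> Basis \<Longrightarrow> l \<bullet> b \<le> u \<bullet> b"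
  have "(\<lambda>(x, y). Complex x y) -` box l u \<inter> space (lborel \<Otimes>\<^sub>M lborel) = {Re l<..<Re u} \<times> {Im l<..<Im u}"
    by (auto simp: in_box_complex_iff space_pair_measure)
  then show "emeasure (distr (lborel \<Otimes>\<^sub>M lborel) borel (\<lambda>(x, y). Complex x y)) (box l u) = (\<Prod>b\<in>Basis. (u - l) \<bullet> b)"
    using le[of 1] le[of \<i>]
    by (simp add: emeasure_distr lborel.emeasure_pair_measure_Times Basis_complex_def inner_complex_def ennreal_mult)
qed simp

lemma nn_integral_lborel_complex:
  assumes [measurable]: "F \<in> borel_measurable (borel :: complex measure)"
  shows "(\<integral>\<^sup>+w. F w \<partial>lborel) = (\<integral>\<^sup>+(x, y). F (Complex x y) \<partial>(lborel \<Otimes>\<^sub>M lborel))"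
  by (subst lborel_complex_eq_distr_pair) (simp add: nn_integral_distr case_prod_unfold)

lemma nn_integral_rescale_le_interval:
  fixes f :: "real \<Rightarrow> ennreal" and c :: real
  assumes [measurable]: "f \<in> borel_measurable borel" and c: "1/2 \<le> \<bar>c\<bar>" "\<bar>c\<bar> \<le> 1"
  shows "(\<integral>\<^sup>+t. indicator {0..1} t * f (a + c * (2*t - 1)) \<partial>lborel) \<le> (\<integral>\<^sup>+x. indicator {a-1..a+1} x * f x \<partial>lborel)"
proof -
  have "(\<integral>\<^sup>+t. indicator {0..1} t * f (a + c * (2*t - 1)) \<partial>lborel)
      \<le> (\<integral>\<^sup>+t. indicator {a-1..a+1} ((a - c) + (2*c) * t) * f ((a - c) + (2*c) * t) \<partial>lborel)"
  proof (rule nn_integral_mono)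
    fix t :: real
    have "\<bar>c * (2*t - 1)\<bar> \<le> 1" if "t \<in> {0..1}"
      using that c by (auto simp: abs_mult intro!: mult_le_one)
    then show "indicator {0..1} t * f (a + c * (2*t - 1))
        \<le> indicator {a-1..a+1} ((a - c) + (2*c) * t) * f ((a - c) + (2*c) * t)"
      by (auto simp: indicator_def abs_le_iff algebra_simps)
  qed
  also have "\<dots> \<le> ennreal \<bar>2*c\<bar> * (\<integral>\<^sup>+t. indicator {a-1..a+1} ((a - c) + (2*c) * t) * f ((a - c) + (2*c) * t) \<partial>lborel)"
  proof -
    have "ennreal 1 \<le> ennreal \<bar>2*c\<bar>"
      using c by (intro ennreal_leI) simp
    from mult_right_mono[OF this zero_le] show ?thesis by simp
  qed
  also have "\<dots> = (\<integral>\<^sup>+x. indicator {a-1..a+1} x * f x \<partial>lborel)"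
    using c by (intro nn_integral_real_affine[symmetric]) auto
  finally show ?thesis .
qed

lemma nn_integral_translate_le_interval:
  fixes f :: "real \<Rightarrow> ennreal" and \<sigma> :: real
  assumes [measurable]: "f \<in> borel_measurable borel" and \<sigma>: "\<bar>\<sigma>\<bar> = 1"
  shows "(\<integral>\<^sup>+s. indicator {1/2..1} s * f (b + \<sigma> * s) \<partial>lborel) \<le> (\<integral>\<^sup>+y. indicator {b-1..b+1} y * f y \<partial>lborel)"
proof -
  have "(\<integral>\<^sup>+s. indicator {1/2..1} s * f (b + \<sigma> * s) \<partial>lborel) \<le> (\<integral>\<^sup>+s. indicator {b-1..b+1} (b + \<sigma> * s) * f (b + \<sigma> * s) \<partial>lborel)"
    using \<sigma> by (intro nn_integral_mono) (auto simp: indicator_def abs_if split: if_splits)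
  also have "\<dots> = (\<integral>\<^sup>+y. indicator {b-1..b+1} y * f y \<partial>lborel)"
    using \<sigma> by (subst nn_integral_real_affine[where c = \<sigma> and t = b]) auto
  finally show ?thesis .
qed

definition side_integral :: "(real \<Rightarrow> real \<Rightarrow> ennreal) \<Rightarrow> real \<Rightarrow> real \<Rightarrow> real \<Rightarrow> real \<Rightarrow> real \<Rightarrow> ennreal" where
  "side_integral h a b \<rho> \<sigma> s = (\<integral>\<^sup>+t. indicator {0..1} t * h (a + \<rho> * s * (2*t - 1)) (b + \<sigma> * s) \<partial>lborel)"

text \<open>For \<open>s \<in> [1/2, 1]\<close> the side stays in the square of half-side \<open>1\<close>, and parametrising it
  over \<open>[0, 1]\<close> has Jacobian \<open>2s \<ge> 1\<close>.\<close>

lemma side_integral_average_le: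
  assumes h[measurable]: "(\<lambda>(x, y). h x y) \<in> borel_measurable (lborel \<Otimes>\<^sub>M lborel)"
    and \<rho>: "\<bar>\<rho>\<bar> = 1" and \<sigma>: "\<bar>\<sigma>\<bar> = 1"
  shows "(\<integral>\<^sup>+s. indicator {1/2..1} s * side_integral h a b \<rho> \<sigma> s \<partial>lborel)
    \<le> (\<integral>\<^sup>+y. indicator {b-1..b+1} y * (\<integral>\<^sup>+x. indicator {a-1..a+1} x * h x y \<partial>lborel) \<partial>lborel)"
proof -
  define A where "A y = (\<integral>\<^sup>+x. indicator {a-1..a+1} x * h x y \<partial>lborel)" for y
  have [measurable]: "(\<lambda>(y, x). indicator {a-1..a+1} x * h x y) \<in> borel_measurable (lborel \<Otimes>\<^sub>M lborel)"
    using measurable_pair_swap[OF h] by (simp add: case_prod_unfold) measurable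
  have [measurable]: "A \<in> borel_measurable borel"
    unfolding A_def using lborel.borel_measurable_nn_integral by (simp add: measurable_lborel1)
  have "(\<integral>\<^sup>+s. indicator {1/2..1} s * side_integral h a b \<rho> \<sigma> s \<partial>lborel)
      \<le> (\<integral>\<^sup>+s. indicator {1/2..1} s * A (b + \<sigma> * s) \<partial>lborel)"
  proof (rule nn_integral_mono)
    fix s :: real
    show "indicator {1/2..1} s * side_integral h a b \<rho> \<sigma> s \<le> indicator {1/2..1} s * A (b + \<sigma> * s)"
      unfolding side_integral_def A_def using \<rho>
      by (cases "s \<in> {1/2..1}") (auto intro!: mult_left_mono nn_integral_rescale_le_interval simp: abs_mult)
  qed
  also have "\<dots> \<le> (\<integral>\<^sup>+y. indicator {b-1..b+1} y * A y \<partial>lborel)"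
    using \<sigma> by (rule nn_integral_translate_le_interval[rotated]) measurable
  finally show ?thesis unfolding A_def .
qed

text \<open>\<open>1/(2s)\<close> times the arc-length integral of \<open>h\<close> over the boundary of \<open>[a-s, a+s] \<times> [b-s, b+s]\<close>;
  the vertical sides are horizontal sides of the transposed function.\<close>

definition square_boundary_integral :: "(real \<Rightarrow> real \<Rightarrow> ennreal) \<Rightarrow> real \<Rightarrow> real \<Rightarrow> real \<Rightarrow> ennreal" where
  "square_boundary_integral h a b s =
     side_integral h a b 1 (-1) s + side_integral (\<lambda>y x. h x y) b a 1 1 s +
     side_integral h a b (-1) 1 s + side_integral (\<lambda>y x. h x y) b a (-1) (-1) s"

lemma nn_integral_lborel_pair_rectangle:
  assumes [measurable]: "(\<lambda>(x, y). h x y) \<in> borel_measurable (lborel \<Otimes>\<^sub>M lborel)"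
    and [measurable]: "A \<in> sets borel" "B \<in> sets borel"
  shows "(\<integral>\<^sup>+y. indicator B y * (\<integral>\<^sup>+x. indicator A x * h x y \<partial>lborel) \<partial>lborel)
      = (\<integral>\<^sup>+(x, y). indicator (A \<times> B) (x, y) * h x y \<partial>(lborel \<Otimes>\<^sub>M lborel))"
    and "(\<integral>\<^sup>+x. indicator A x * (\<integral>\<^sup>+y. indicator B y * h x y \<partial>lborel) \<partial>lborel)
      = (\<integral>\<^sup>+(x, y). indicator (A \<times> B) (x, y) * h x y \<partial>(lborel \<Otimes>\<^sub>M lborel))"
  by (subst lborel_pair.nn_integral_snd[symmetric] lborel.nn_integral_fst[symmetric],
      auto simp: nn_integral_cmult[symmetric] indicator_times mult_ac intro!: nn_integral_cong)+

lemma square_boundary_average_le: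
  assumes h[measurable]: "(\<lambda>(x, y). h x y) \<in> borel_measurable (lborel \<Otimes>\<^sub>M lborel)"
  shows "(\<integral>\<^sup>+s. indicator {1/2..1} s * square_boundary_integral h a b s \<partial>lborel)
    \<le> 4 * (\<integral>\<^sup>+(x, y). indicator ({a-1..a+1} \<times> {b-1..b+1}) (x, y) * h x y \<partial>(lborel \<Otimes>\<^sub>M lborel))"
    (is "_ \<le> 4 * ?R")
proof -
  have h'[measurable]: "(\<lambda>(y, x). h x y) \<in> borel_measurable (lborel \<Otimes>\<^sub>M lborel)"
    using measurable_pair_swap[OF h] by simp
  have horizontal: "(\<integral>\<^sup>+s. indicator {1/2..1} s * side_integral h a b \<rho> \<sigma> s \<partial>lborel) \<le> ?R"
    and vertical: "(\<integral>\<^sup>+s. indicator {1/2..1} s * side_integral (\<lambda>y x. h x y) b a \<rho> \<sigma> s \<partial>lborel) \<le> ?R"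
    if "\<bar>\<rho>\<bar> = 1" "\<bar>\<sigma>\<bar> = 1" for \<rho> \<sigma> :: real
    using side_integral_average_le[OF h that, of a b] side_integral_average_le[OF h' that, of b a]
      nn_integral_lborel_pair_rectangle[OF h, of "{a-1..a+1}" "{b-1..b+1}"]
    by simp_all
  have [measurable]: "(\<lambda>s. side_integral h a b \<rho> \<sigma> s) \<in> borel_measurable lborel"
    "(\<lambda>s. side_integral (\<lambda>y x. h x y) b a \<rho> \<sigma> s) \<in> borel_measurable lborel" for \<rho> \<sigma>
    unfolding side_integral_def by measurable
  have "(\<integral>\<^sup>+s. indicator {1/2..1} s * square_boundary_integral h a b s \<partial>lborel)
      = (\<integral>\<^sup>+s. indicator {1/2..1} s * side_integral h a b 1 (-1) s \<partial>lborel)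
      + (\<integral>\<^sup>+s. indicator {1/2..1} s * side_integral (\<lambda>y x. h x y) b a 1 1 s \<partial>lborel)
      + (\<integral>\<^sup>+s. indicator {1/2..1} s * side_integral h a b (-1) 1 s \<partial>lborel)
      + (\<integral>\<^sup>+s. indicator {1/2..1} s * side_integral (\<lambda>y x. h x y) b a (-1) (-1) s \<partial>lborel)"
    unfolding square_boundary_integral_def by (simp add: distrib_left nn_integral_add)
  also have "\<dots> \<le> ?R + ?R + ?R + ?R"
    by (intro add_mono horizontal vertical) auto
  also have "\<dots> = (1 + 1 + 1 + 1) * ?R"
    by (simp only: distrib_right mult_1)
  also have "(1 + 1 + 1 + 1 :: ennreal) = 4"
    by simp
  finally show ?thesis .
qed

lemma norm_contour_integral_linepath_le:
  fixes G :: "complex \<Rightarrow> complex"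
  assumes G: "continuous_on (closed_segment u v) G" and s: "s > 0"
    and far: "\<And>t. t \<in> {0..1} \<Longrightarrow> s \<le> cmod (linepath u v t - z)"
    and int: "(\<lambda>w. G w / (w - z)) contour_integrable_on linepath u v"
  shows "ennreal (cmod (contour_integral (linepath u v) (\<lambda>w. G w / (w - z))))
    \<le> ennreal (cmod (v - u) / s) * (\<integral>\<^sup>+t. indicator {0..1} t * ennreal (cmod (G (linepath u v t))) \<partial>lborel)"
proof -
  define I where "I = contour_integral (linepath u v) (\<lambda>w. G w / (w - z))"
  define g where "g t = cmod (G (linepath u v t))" for t
  have q: "((\<lambda>t. G (linepath u v t) / (linepath u v t - z) * (v - u)) has_integral I) {0..1}"
    using has_contour_integral_integral[OF int] by (simp add: I_def has_contour_integral_linepath)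
  have "continuous_on {0..1} g"
    unfolding g_def using G
    by (intro continuous_intros continuous_on_compose2[OF G continuous_on_linepath])
      (auto simp: path_image_def[symmetric])
  then have gi: "(g has_integral integral {0..1} g) {0..1}"
    using integrable_continuous_real by blast
  have "cmod I \<le> integral {0..1} (\<lambda>t. cmod (v - u) / s * g t)"
  proof (subst integral_unique[OF q, symmetric], rule integral_norm_bound_integral)
    show "(\<lambda>t. cmod (v - u) / s * g t) integrable_on {0..1}"
      using integrable_cmul[of g "{0..1}" "cmod (v - u) / s"] gi by auto
    fix t :: real assume "t \<in> {0..1}"
    then have d: "s \<le> cmod (linepath u v t - z)"
      by (rule far)
    have "cmod (G (linepath u v t) / (linepath u v t - z) * (v - u)) = cmod (v - u) * g t / cmod (linepath u v t - z)"
      by (simp add: g_def norm_mult norm_divide)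
    also have "\<dots> \<le> cmod (v - u) * g t / s"
      using d s by (intro divide_left_mono mult_pos_pos) (auto simp: g_def)
    finally show "cmod (G (linepath u v t) / (linepath u v t - z) * (v - u)) \<le> cmod (v - u) / s * g t"
      by simp
  qed (use q in blast)
  then have "ennreal (cmod I) \<le> ennreal (cmod (v - u) / s * integral {0..1} g)"
    by (intro ennreal_leI) simp
  also have "\<dots> = ennreal (cmod (v - u) / s) * ennreal (integral {0..1} g)"
    using s has_integral_nonneg[OF gi] by (intro ennreal_mult) (auto simp: g_def)
  also have "ennreal (integral {0..1} g) = (\<integral>\<^sup>+t. indicator {0..1} t * ennreal (g t) \<partial>lborel)"
    by (subst nn_integral_has_integral_lebesgue[OF _ gi, symmetric])
      (auto simp: g_def indicator_def intro!: nn_integral_cong)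
  finally show ?thesis unfolding I_def g_def .
qed

lemma linepath_Complex:
  "linepath (Complex a b) (Complex c d) t = Complex ((1 - t) * a + t * c) ((1 - t) * b + t * d)"
  by (simp add: linepath_def complex_eq_iff)

lemma cauchy_integral_rectpath_sides:
  fixes G :: "complex \<Rightarrow> complex"
  assumes hol: "G holomorphic_on UNIV" and z: "z \<in> box a c"
  defines "b \<equiv> Complex (Re c) (Im a)" and "d \<equiv> Complex (Re a) (Im c)" and "f \<equiv> \<lambda>w. G w / (w - z)"
  shows "f contour_integrable_on linepath a b" "f contour_integrable_on linepath b c"
    "f contour_integrable_on linepath c d" "f contour_integrable_on linepath d a"
    and "2 * pi * cmod (G z) \<le> cmod (contour_integral (linepath a b) f)
      + (cmod (contour_integral (linepath b c) f) + (cmod (contour_integral (linepath c d) f)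
      + cmod (contour_integral (linepath d a) f)))"
proof -
  have rect: "rectpath a c = linepath a b +++ linepath b c +++ linepath c d +++ linepath d a"
    by (simp add: rectpath_def Let_def b_def d_def)
  have "(f has_contour_integral (2 * pi * \<i> * winding_number (rectpath a c) z * G z)) (rectpath a c)"
    unfolding f_def using hol z
    by (intro Cauchy_integral_formula_convex_simple[where S = UNIV])
      (auto simp: path_image_rectpath_cbox_minus_box in_box_complex_iff)
  then have C: "(f has_contour_integral (2 * pi * \<i> * G z)) (rectpath a c)"
    using winding_number_rectpath[OF z] by simp
  then have "f contour_integrable_on (linepath a b +++ linepath b c +++ linepath c d +++ linepath d a)"
    unfolding rect contour_integrable_on_def by blast
  then show int: "f contour_integrable_on linepath a b" "f contour_integrable_on linepath b c"
    "f contour_integrable_on linepath c d" "f contour_integrable_on linepath d a"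
    by (auto simp: valid_path_join)
  have "2 * pi * \<i> * G z = contour_integral (rectpath a c) f"
    using contour_integral_unique[OF C] by simp
  also have "\<dots> = contour_integral (linepath a b) f + (contour_integral (linepath b c) f
      + (contour_integral (linepath c d) f + contour_integral (linepath d a) f))"
    unfolding rect using int by (simp add: valid_path_join)
  finally have sum: "2 * pi * \<i> * G z = contour_integral (linepath a b) f + (contour_integral (linepath b c) f
      + (contour_integral (linepath c d) f + contour_integral (linepath d a) f))" .
  have "2 * pi * cmod (G z) = cmod (2 * pi * \<i> * G z)"
    by (simp add: norm_mult)
  also have "\<dots> \<le> cmod (contour_integral (linepath a b) f)
      + (cmod (contour_integral (linepath b c) f) + (cmod (contour_integral (linepath c d) f)
      + cmod (contour_integral (linepath d a) f)))"
    unfolding sum by (intro order.trans[OF norm_triangle_ineq] add_mono order_refl)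
  finally show "2 * pi * cmod (G z) \<le> cmod (contour_integral (linepath a b) f)
      + (cmod (contour_integral (linepath b c) f) + (cmod (contour_integral (linepath c d) f)
      + cmod (contour_integral (linepath d a) f)))" .
qed

lemma norm_le_square_boundary_integral:
  fixes G :: "complex \<Rightarrow> complex"
  assumes hol: "G holomorphic_on UNIV" and s: "s > 0"
  shows "ennreal (2 * pi * cmod (G z))
    \<le> 2 * square_boundary_integral (\<lambda>x y. ennreal (cmod (G (Complex x y)))) (Re z) (Im z) s"
proof -
  define a b where "a = Re z" and "b = Im z"
  define a1 a3 where "a1 = Complex (a - s) (b - s)" and "a3 = Complex (a + s) (b + s)"
  define a2 a4 where "a2 = Complex (Re a3) (Im a1)" and "a4 = Complex (Re a1) (Im a3)"
  define N where "N u v = ennreal (cmod (contour_integral (linepath u v) (\<lambda>w. G w / (w - z))))" for u v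
  define h where "h x y = ennreal (cmod (G (Complex x y)))" for x y
  have "z \<in> box a1 a3"
    using s by (simp add: in_box_complex_iff a1_def a3_def a_def b_def)
  note sides = cauchy_integral_rectpath_sides[OF hol this, folded a2_def a4_def]
  have cont: "continuous_on (closed_segment u v) G" for u v
    using holomorphic_on_imp_continuous_on[OF hol] by (rule continuous_on_subset) simp
  have side: "N u v \<le> 2 * S"
    if "(\<lambda>w. G w / (w - z)) contour_integrable_on linepath u v" and "cmod (v - u) = 2 * s"
      and "\<And>t. s \<le> cmod (linepath u v t - z)"
      and "(\<integral>\<^sup>+t. indicator {0..1} t * ennreal (cmod (G (linepath u v t))) \<partial>lborel) = S" for u v S
    using norm_contour_integral_linepath_le[OF cont s that(3,1)] that(2,4) s by (simp add: N_def)
  have "sqrt (4 * s\<^sup>2) = s * 2"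
    using s by (intro real_sqrt_unique) (auto simp: power2_eq_square)
  note corners = this a1_def a2_def a3_def a4_def h_def side_integral_def linepath_Complex complex_diff complex_norm
  have "N a1 a2 \<le> 2 * side_integral h a b 1 (-1) s"
    using s abs_Im_le_cmod[of "linepath a1 a2 _ - z"]
    by (intro side sides) (simp_all add: corners b_def algebra_simps)
  moreover have "N a2 a3 \<le> 2 * side_integral (\<lambda>y x. h x y) b a 1 1 s"
    using s abs_Re_le_cmod[of "linepath a2 a3 _ - z"]
    by (intro side sides) (simp_all add: corners a_def algebra_simps)
  moreover have "N a3 a4 \<le> 2 * side_integral h a b (-1) 1 s"
    using s abs_Im_le_cmod[of "linepath a3 a4 _ - z"]
    by (intro side sides) (simp_all add: corners b_def algebra_simps)
  moreover have "N a4 a1 \<le> 2 * side_integral (\<lambda>y x. h x y) b a (-1) (-1) s"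
    using s abs_Re_le_cmod[of "linepath a4 a1 _ - z"]
    by (intro side sides) (simp_all add: corners a_def algebra_simps)
  ultimately have "N a1 a2 + (N a2 a3 + (N a3 a4 + N a4 a1))
      \<le> 2 * side_integral h a b 1 (-1) s + (2 * side_integral (\<lambda>y x. h x y) b a 1 1 s
        + (2 * side_integral h a b (-1) 1 s + 2 * side_integral (\<lambda>y x. h x y) b a (-1) (-1) s))"
    by (intro add_mono)
  moreover have "ennreal (2 * pi * cmod (G z)) \<le> N a1 a2 + (N a2 a3 + (N a3 a4 + N a4 a1))"
    using sides(5) unfolding N_def by (simp flip: ennreal_plus)
  ultimately show ?thesis
    unfolding square_boundary_integral_def h_def a_def b_def by (simp add: distrib_left add.assoc)
qed

lemma norm_le_square_integral:
  fixes G :: "complex \<Rightarrow> complex"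
  assumes hol: "G holomorphic_on UNIV"
  shows "ennreal (pi * cmod (G z))
    \<le> 8 * (\<integral>\<^sup>+w\<in>cbox (z - Complex 1 1) (z + Complex 1 1). ennreal (cmod (G w)) \<partial>lborel)"
proof -
  define h where "h = (\<lambda>x y. ennreal (cmod (G (Complex x y))))"
  define a b where "a = Re z" and "b = Im z"
  have [measurable]: "G \<in> borel_measurable borel"
    using holomorphic_on_imp_continuous_on[OF hol] by (rule borel_measurable_continuous_onI)
  have [measurable]: "(\<lambda>(x, y). h x y) \<in> borel_measurable (lborel \<Otimes>\<^sub>M lborel)"
    unfolding h_def by (simp add: case_prod_unfold) measurable
  have [measurable]: "square_boundary_integral h a b \<in> borel_measurable lborel"
    unfolding square_boundary_integral_def side_integral_def by measurable
  have "(\<integral>\<^sup>+s. ennreal (2 * pi * cmod (G z)) * indicator {1/2..1::real} s \<partial>lborel)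
      = ennreal (2 * pi * cmod (G z)) * ennreal (1/2)"
    by (subst nn_integral_cmult_indicator) auto
  also have "\<dots> = ennreal (pi * cmod (G z))"
    by (subst ennreal_mult[symmetric]) auto
  finally have "ennreal (pi * cmod (G z)) = (\<integral>\<^sup>+s. ennreal (2 * pi * cmod (G z)) * indicator {1/2..1::real} s \<partial>lborel)" ..
  also have "\<dots> \<le> (\<integral>\<^sup>+s. 2 * (indicator {1/2..1} s * square_boundary_integral h a b s) \<partial>lborel)"
    using norm_le_square_boundary_integral[OF hol, of _ z]
    by (intro nn_integral_mono) (auto simp: indicator_def h_def a_def b_def)
  also have "\<dots> = 2 * (\<integral>\<^sup>+s. indicator {1/2..1} s * square_boundary_integral h a b s \<partial>lborel)"
    by (rule nn_integral_cmult) measurable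
  also have "\<dots> \<le> 2 * (4 * (\<integral>\<^sup>+(x, y). indicator ({a-1..a+1} \<times> {b-1..b+1}) (x, y) * h x y \<partial>(lborel \<Otimes>\<^sub>M lborel)))"
    by (intro mult_left_mono square_boundary_average_le) measurable
  also have "(\<integral>\<^sup>+(x, y). indicator ({a-1..a+1} \<times> {b-1..b+1}) (x, y) * h x y \<partial>(lborel \<Otimes>\<^sub>M lborel))
      = (\<integral>\<^sup>+w\<in>cbox (z - Complex 1 1) (z + Complex 1 1). ennreal (cmod (G w)) \<partial>lborel)"
    by (subst nn_integral_lborel_complex)
      (auto simp: h_def a_def b_def in_cbox_complex_iff indicator_def intro!: nn_integral_cong)
  finally show ?thesis
    by (simp add: mult.assoc[symmetric])
qed

lemma borel_measurable_fock_integrand [measurable]: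
  assumes [measurable]: "p \<in> borel_measurable lebesgue" "f \<in> borel_measurable lebesgue"
  shows "(\<lambda>z. ennreal (cmod (f z) powr p z * exp (- p z * (cmod z)\<^sup>2))) \<in> borel_measurable lebesgue"
proof -
  have [measurable]: "(\<lambda>z::complex. z) \<in> borel_measurable lebesgue"
    using measurable_completion[of "\<lambda>z::complex. z" lborel borel] by simp
  show ?thesis by measurable
qed

lemma fock_modular_scale_le:
  assumes [measurable]: "p \<in> borel_measurable lebesgue" "g \<in> borel_measurable lebesgue"
    and p: "\<And>z. 1 \<le> p z" and c: "0 < c" "c \<le> 1"
  shows "fock_modular p (\<lambda>z. of_real c * g z) \<le> ennreal c * fock_modular p g"
  unfolding fock_modular_def
proof (subst nn_integral_cmult[symmetric], measurable, rule nn_integral_mono)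
  fix z
  have "c powr p z \<le> c"
    using c p[of z] by (intro powr_le_one_le) auto
  then have "cmod (of_real c * g z) powr p z \<le> c * cmod (g z) powr p z"
    using c by (simp add: norm_mult powr_mult mult_right_mono)
  then have "cmod (of_real c * g z) powr p z * exp (- p z * (cmod z)\<^sup>2)
      \<le> c * (cmod (g z) powr p z * exp (- p z * (cmod z)\<^sup>2))"
    by (simp add: mult.assoc[symmetric] mult_right_mono)
  then show "ennreal (cmod (of_real c * g z) powr p z * exp (- p z * (cmod z)\<^sup>2))
      \<le> ennreal c * ennreal (cmod (g z) powr p z * exp (- p z * (cmod z)\<^sup>2))"
    using c by (simp add: ennreal_mult[symmetric] ennreal_leI)
qed

lemma ex_fock_modular_divide_le_1:
  assumes [measurable]: "p \<in> borel_measurable lebesgue" "f \<in> borel_measurable lebesgue"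
    and p: "\<And>z. 1 \<le> p z" and c: "c > 0" and finite: "fock_modular p (\<lambda>z. of_real c * f z) < \<infinity>"
  shows "\<exists>t>0. fock_modular p (\<lambda>z. f z / of_real t) \<le> 1"
proof -
  obtain m where m: "fock_modular p (\<lambda>z. of_real c * f z) = ennreal m" "0 \<le> m"
    using finite by (cases "fock_modular p (\<lambda>z. of_real c * f z)") auto
  define K where "K = max 1 m"
  have K: "1 \<le> K" "m \<le> K"
    unfolding K_def by auto
  have "(\<lambda>z. f z / of_real (K / c)) = (\<lambda>z. of_real (1 / K) * (of_real c * f z))"
    using c K by (auto simp: field_simps)
  moreover have "fock_modular p (\<lambda>z. of_real (1 / K) * (of_real c * f z))
      \<le> ennreal (1 / K) * fock_modular p (\<lambda>z. of_real c * f z)"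
    using K by (intro fock_modular_scale_le p) auto
  ultimately have "fock_modular p (\<lambda>z. f z / of_real (K / c)) \<le> ennreal (1 / K) * ennreal m"
    using m(1) by simp
  also have "\<dots> \<le> 1"
    using K m(2) by (simp add: ennreal_mult[symmetric] ennreal_le_1 field_simps)
  finally show ?thesis
    using K c by (intro exI[of _ "K / c"]) auto
qed

lemma le_one_plus_powr:
  fixes x q :: real
  assumes "0 \<le> x" "1 \<le> q"
  shows "x \<le> 1 + x powr q"
proof (cases "x \<le> 1")
  case False
  then have "x powr 1 \<le> x powr q"
    using assms by (intro powr_mono) auto
  then show ?thesis
    using False by simp
qed (use powr_ge_zero[of x q] in linarith)

lemma norm_exp_gaussian_shift:
  "cmod (exp (of_real ((cmod z)\<^sup>2) - 2 * cnj z * w)) = exp ((cmod (w - z))\<^sup>2 - (cmod w)\<^sup>2)"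
proof -
  have "Re (of_real ((cmod z)\<^sup>2) - 2 * cnj z * w) = (cmod (w - z))\<^sup>2 - (cmod w)\<^sup>2"
    unfolding cmod_power2 by (simp add: power2_eq_square algebra_simps)
  then show ?thesis
    by (simp only: norm_exp_eq_Re)
qed

lemma norm_weighted_le_fock_integrand:
  fixes g :: "complex \<Rightarrow> complex"
  assumes "w \<in> cbox (z - Complex 1 1) (z + Complex 1 1)" and "1 \<le> q"
  shows "cmod (g w) * exp ((cmod (w - z))\<^sup>2 - (cmod w)\<^sup>2)
    \<le> exp 2 * (1 + cmod (g w) powr q * exp (- q * (cmod w)\<^sup>2))"
proof -
  define x where "x = cmod (g w) * exp (- (cmod w)\<^sup>2)"
  have "x powr q = cmod (g w) powr q * exp (- q * (cmod w)\<^sup>2)"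
    unfolding x_def by (simp add: powr_mult exp_powr_real mult_ac)
  then have "x \<le> 1 + cmod (g w) powr q * exp (- q * (cmod w)\<^sup>2)"
    using le_one_plus_powr[of x q] assms(2) by (simp add: x_def)
  have "(cmod (w - z))\<^sup>2 = (Re w - Re z)\<^sup>2 + (Im w - Im z)\<^sup>2"
    by (simp add: cmod_power2)
  also have "\<dots> \<le> 1 + 1"
    using assms(1) by (intro add_mono) (auto simp: in_cbox_complex_iff abs_square_le_1 abs_le_iff)
  finally have "cmod (g w) * exp ((cmod (w - z))\<^sup>2 - (cmod w)\<^sup>2) \<le> x * exp 2"
    by (simp add: x_def exp_diff exp_minus field_simps mult_left_mono)
  with \<open>x \<le> _\<close> show ?thesis
    by (smt (verit) exp_gt_zero mult_right_mono mult.commute)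
qed

lemma nn_integral_square_weighted_le_fock_modular:
  fixes g :: "complex \<Rightarrow> complex"
  assumes [measurable]: "p \<in> borel_measurable lebesgue" "g \<in> borel_measurable lebesgue"
    and p: "\<And>z. 1 \<le> p z"
  shows "(\<integral>\<^sup>+w\<in>cbox (z - Complex 1 1) (z + Complex 1 1).
      ennreal (cmod (g w) * exp ((cmod (w - z))\<^sup>2 - (cmod w)\<^sup>2)) \<partial>lebesgue)
    \<le> ennreal (exp 2) * (4 + fock_modular p g)"
proof -
  define Q where "Q = cbox (z - Complex 1 1) (z + Complex 1 1)"
  define F where "F w = ennreal (cmod (g w) powr p w * exp (- p w * (cmod w)\<^sup>2))" for w
  have [measurable]: "Q \<in> sets lebesgue"
    by (simp add: Q_def)
  have [measurable]: "F \<in> borel_measurable lebesgue"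
    unfolding F_def by measurable
  have "emeasure lebesgue Q = 4"
    by (simp add: Q_def emeasure_lborel_cbox_eq Basis_complex_def inner_complex_def)
  have "ennreal (cmod (g w) * exp ((cmod (w - z))\<^sup>2 - (cmod w)\<^sup>2)) * indicator Q w
      \<le> ennreal (exp 2) * (indicator Q w + F w)" for w
  proof (cases "w \<in> Q")
    case True
    then have "ennreal (cmod (g w) * exp ((cmod (w - z))\<^sup>2 - (cmod w)\<^sup>2))
        \<le> ennreal (exp 2 * (1 + cmod (g w) powr p w * exp (- p w * (cmod w)\<^sup>2)))"
      unfolding Q_def by (intro ennreal_leI norm_weighted_le_fock_integrand p)
    with True show ?thesis
      by (simp add: F_def ennreal_mult ennreal_plus)
  qed simp
  then have "(\<integral>\<^sup>+w\<in>Q. ennreal (cmod (g w) * exp ((cmod (w - z))\<^sup>2 - (cmod w)\<^sup>2)) \<partial>lebesgue)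
      \<le> (\<integral>\<^sup>+w. ennreal (exp 2) * (indicator Q w + F w) \<partial>lebesgue)"
    by (intro nn_integral_mono)
  also have "\<dots> = ennreal (exp 2) * (emeasure lebesgue Q + fock_modular p g)"
    unfolding fock_modular_def F_def[symmetric] by (simp add: nn_integral_cmult nn_integral_add)
  finally show ?thesis
    unfolding Q_def \<open>emeasure lebesgue Q = 4\<close>[unfolded Q_def] .
qed

lemma norm_le_of_fock_modular_le_1:
  fixes g :: "complex \<Rightarrow> complex"
  assumes hol: "g holomorphic_on UNIV"
    and [measurable]: "p \<in> borel_measurable lebesgue" "g \<in> borel_measurable lebesgue"
    and p: "\<And>z. 1 \<le> p z" and modular: "fock_modular p g \<le> 1"
  shows "cmod (g z) \<le> 40 * exp 2 / pi * exp ((cmod z)\<^sup>2)"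
proof -
  define G where "G = (\<lambda>w. g w * exp (of_real ((cmod z)\<^sup>2) - 2 * cnj z * w))"
  define Q where "Q = cbox (z - Complex 1 1) (z + Complex 1 1)"
  have norm_G: "cmod (G w) = cmod (g w) * exp ((cmod (w - z))\<^sup>2 - (cmod w)\<^sup>2)" for w
    unfolding G_def norm_mult norm_exp_gaussian_shift ..
  have G_hol: "G holomorphic_on UNIV"
    unfolding G_def by (intro holomorphic_intros hol)
  have [measurable]: "G \<in> borel_measurable borel"
    using holomorphic_on_imp_continuous_on[OF G_hol] by (rule borel_measurable_continuous_onI)
  have "ennreal (pi * cmod (G z)) \<le> 8 * (\<integral>\<^sup>+w\<in>Q. ennreal (cmod (G w)) \<partial>lborel)"
    unfolding Q_def by (rule norm_le_square_integral[OF G_hol])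
  also have "(\<integral>\<^sup>+w\<in>Q. ennreal (cmod (G w)) \<partial>lborel) = (\<integral>\<^sup>+w\<in>Q. ennreal (cmod (G w)) \<partial>lebesgue)"
    by (subst nn_integral_completion[symmetric]) (simp_all add: Q_def)
  also have "\<dots> \<le> ennreal (exp 2) * (4 + fock_modular p g)"
    unfolding norm_G Q_def by (rule nn_integral_square_weighted_le_fock_modular[OF _ _ p]) measurable
  also have "\<dots> \<le> ennreal (exp 2) * (4 + 1)"
    by (intro mult_left_mono add_left_mono modular) simp
  also have "8 * (ennreal (exp 2) * (4 + 1)) = ennreal (8 * (exp 2 * 5))"
    by (simp only: ennreal_mult exp_ge_zero zero_le_numeral mult_nonneg_nonneg) simp
  finally have "pi * (cmod (g z) * exp (- (cmod z)\<^sup>2)) \<le> 8 * (exp 2 * 5)"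
    by (simp add: mult_left_mono norm_G)
  then have "cmod (g z) / exp ((cmod z)\<^sup>2) \<le> 40 * exp 2 / pi"
    by (simp add: exp_minus field_simps)
  then show ?thesis
    by (simp add: divide_le_eq)
qed

lemma norm_le_var_L_norm:
  assumes p: "variable_exponent p" and f: "f \<in> var_Fock p"
  shows "cmod (f z) \<le> 40 * exp 2 / pi * exp ((cmod z)\<^sup>2) * var_L_norm p f"
proof -
  define C where "C = 40 * exp 2 / pi * exp ((cmod z)\<^sup>2)"
  have [measurable]: "p \<in> borel_measurable lebesgue" and p1: "\<And>z. 1 \<le> p z"
    using p by (auto simp: variable_exponent_def)
  have hol: "f holomorphic_on UNIV" and [measurable]: "f \<in> borel_measurable lebesgue"
    and "\<exists>c>0. fock_modular p (\<lambda>z. of_real c * f z) < \<infinity>"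
    using f by (auto simp: var_Fock_def var_L_def)
  then have nonempty: "{t. t > 0 \<and> fock_modular p (\<lambda>z. f z / of_real t) \<le> 1} \<noteq> {}"
    using ex_fock_modular_divide_le_1[OF _ _ p1] by auto
  have "cmod (f z) / C \<le> t" if "t > 0" and "fock_modular p (\<lambda>z. f z / of_real t) \<le> 1" for t
  proof -
    have "cmod (f z / of_real t) \<le> C"
      unfolding C_def using hol that
      by (intro norm_le_of_fock_modular_le_1[OF _ _ _ p1]) (auto intro!: holomorphic_intros)
    with that(1) show ?thesis
      by (simp add: norm_divide C_def field_simps)
  qed
  then have "cmod (f z) / C \<le> var_L_norm p f"
    unfolding var_L_norm_def by (intro cInf_greatest[OF nonempty]) auto
  then show ?thesis
    by (simp add: C_def field_simps)
qed

theorem mainTheorem4: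
  assumes "p \<in> var_exp_class"
  shows "\<exists>C>0. \<forall>f \<in> var_Fock p. \<forall>z. cmod (f z) \<le> C * exp ((cmod z)\<^sup>2) * var_L_norm p f"
proof (intro exI conjI ballI allI)
  show "40 * exp 2 / pi > (0::real)"
    by simp
  show "cmod (f z) \<le> 40 * exp 2 / pi * exp ((cmod z)\<^sup>2) * var_L_norm p f" if "f \<in> var_Fock p" for f z
    using assms that by (intro norm_le_var_L_norm) (simp_all add: var_exp_class_def)
qed

end
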